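(* Let $\Gamma=(V,E)$ be a finite multigraph without loops, with arc set $A=A(\Gamma)$, and let $U=SC'$ be a flip-flop coined QW on $\mathcal{H}_A$ whose coin is $C'=\bigoplus_{v\in V}C_v$, where each $C_v=2\ket{\alpha^{(v)}}\bra{\alpha^{(v)}}-I_{\mathcal{H}_v}$ is a generalized Grover operator on $\mathcal{H}_v=\mathrm{span}\{\ket{a}:o(a)=v\}$ with $\ket{\alpha^{(v)}}\in\mathcal{H}_v$ a unit vector. Let $S(\Gamma)$ be the subdivision graph of $\Gamma$, viewed as the bipartite graph with parts $X=V$ and $Y=E$, and let $\mathcal{U}_\eta:\mathcal{H}_A\to\mathcal{H}_{E(S(\Gamma))}$ be the unitary defined by $\mathcal{U}_\eta\ket{a}=\ket{o(a)}\otimes\ket{\{a,\bar a\}}$. Then there is an extended Szegedy walk with evolution operator $W$ on $\mathcal{H}^{|V|}\otimes\mathcal{H}^{|E|}$ for the bipartite graph $S(\Gamma)$ such that $$U=\mathcal{U}_\eta^{-1}\,W|_{\mathcal{H}_{E(S(\Gamma))}}\,\mathcal{U}_\eta .$$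
   Context: Multigraph and arcs: each edge $e\in E$ is identified with a pair of opposite arcs $\{a,\bar a\}$; $A$ is the set of all such arcs, $o(a),t(a)\in V$ denote origin and terminal vertex of $a$, with $o(\bar a)=t(a)$, $t(\bar a)=o(a)$. $\mathcal{H}_A$ is the Hilbert space with orthonormal basis $\{\ket{a}:a\in A\}$ (equivalently the basis $\ket{v,j}$, $v\in V$, $0\le j<d_v$, one vector per vertex and incident edge-end). Flip-flop coined QW: $U=SC'$ with shift $S\ket{a}=\ket{\bar a}$ and coin $C'$ a direct sum of operators $C_v$ on the subspaces $\mathcal{H}_v=\mathrm{span}\{\ket{a}:o(a)=v\}$. A generalized Grover operator on $\mathcal{H}_v$ is $2\ket{\psi}\bra{\psi}-I_{\mathcal{H}_v}$ for a unit vector $\ket{\psi}\in\mathcal{H}_v$. Subdivision graph $S(\Gamma)$: vertex set $V\cup E$, edge set $\{\{v,e\}: v\in V, e\in E, v\in e\}$ (a new vertex is inserted in the middle of each edge); it is bipartite with parts $X=V$, $Y=E$, and $\mathcal{H}_{E(S(\Gamma))}$ denotes the subspace of $\mathcal{H}^{|V|}\otimes\mathcal{H}^{|E|}$ spanned by $\{\ket{v}\otimes\ket{e}: v\in e\}$. Extended Szegedy QW on a connected bipartite graph $(X,Y,E')$ with biadjacency matrix $M$: take right-stochastic $P=(p_{xy})_{x\in X,y\in Y}$ and $Q=(q_{yx})_{y\in Y,x\in X}$ with $M_{x,y}=0\Rightarrow p_{xy}=q_{yx}=0$, real phases $\theta_{xy},\theta'_{xy}$, vectors $\ket{\phi_x}=\sum_{y}\sqrt{p_{xy}}e^{i\theta_{xy}}\ket{x}\otimes\ket{y}$,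 $\ket{\psi_y}=\sum_x\sqrt{q_{yx}}e^{i\theta'_{xy}}\ket{x}\otimes\ket{y}$ in $\mathcal{H}^{|X|}\otimes\mathcal{H}^{|Y|}$, and $W=R_1R_0$ with $R_0=2\sum_x\ket{\phi_x}\bra{\phi_x}-I$, $R_1=2\sum_y\ket{\psi_y}\bra{\psi_y}-I$. *)

theory Defs
  imports Complex_Main
begin

definition loopless_multigraph :: "'v set \<Rightarrow> 'a set \<Rightarrow> ('a \<Rightarrow> 'a) \<Rightarrow> ('a \<Rightarrow> 'v) \<Rightarrow> bool" where
  "loopless_multigraph V A rv orig \<longleftrightarrow> finite V \<and> finite A \<and>
     (\<forall>a\<in>A. rv a \<in> A \<and> rv (rv a) = a \<and> rv a \<noteq> a \<and> orig a \<in> V \<and> orig (rv a) \<noteq> orig a)"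

definition edges :: "'a set \<Rightarrow> ('a \<Rightarrow> 'a) \<Rightarrow> 'a set set" where
  "edges A rv = {{a, rv a} | a. a \<in> A}"

definition arcs_at :: "'a set \<Rightarrow> ('a \<Rightarrow> 'v) \<Rightarrow> 'v \<Rightarrow> 'a set" where
  "arcs_at A orig v = {a \<in> A. orig a = v}"

text \<open>Vectors of H_A are functions A -> complex.  Coin C' = direct sum of generalized
  Grover operators 2|alpha^(v)><alpha^(v)| - I on H_v; alpha collects all alpha^(v).\<close>
definition grover_coin :: "'a set \<Rightarrow> ('a \<Rightarrow> 'v) \<Rightarrow> ('a \<Rightarrow> complex) \<Rightarrow> ('a \<Rightarrow> complex) \<Rightarrow> ('a \<Rightarrow> complex)" where
  "grover_coin A orig alpha f =
     (\<lambda>b. 2 * alpha b * (\<Sum>c\<in>arcs_at A orig (orig b). cnj (alpha c) * f c) - f b)"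

definition shift_op :: "('a \<Rightarrow> 'a) \<Rightarrow> ('a \<Rightarrow> complex) \<Rightarrow> ('a \<Rightarrow> complex)" where
  "shift_op rv f = (\<lambda>a. f (rv a))"

definition flipflop_U :: "'a set \<Rightarrow> ('a \<Rightarrow> 'a) \<Rightarrow> ('a \<Rightarrow> 'v) \<Rightarrow> ('a \<Rightarrow> complex) \<Rightarrow> ('a \<Rightarrow> complex) \<Rightarrow> ('a \<Rightarrow> complex)" where
  "flipflop_U A rv orig alpha f = shift_op rv (grover_coin A orig alpha f)"

text \<open>U_eta |a> = |o(a)> (x) |{a, rv a}>, as a map H_A -> H^|V| (x) H^|E| (functions on V x E).\<close>
definition U_eta :: "'a set \<Rightarrow> ('a \<Rightarrow> 'a) \<Rightarrow> ('a \<Rightarrow> 'v) \<Rightarrow> ('a \<Rightarrow> complex) \<Rightarrow> ('v \<times> 'a set \<Rightarrow> complex)" where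
  "U_eta A rv orig f = (\<lambda>(v, e). \<Sum>a\<in>{a \<in> A. orig a = v \<and> e = {a, rv a}}. f a)"

definition reflection :: "'i set \<Rightarrow> 'k set \<Rightarrow> ('k \<Rightarrow> 'i \<Rightarrow> complex) \<Rightarrow> ('i \<Rightarrow> complex) \<Rightarrow> ('i \<Rightarrow> complex)" where
  "reflection I K psi g = (\<lambda>i. 2 * (\<Sum>k\<in>K. psi k i * (\<Sum>j\<in>I. cnj (psi k j) * g j)) - g i)"

definition szegedy_phi :: "('x \<Rightarrow> 'y \<Rightarrow> real) \<Rightarrow> ('x \<Rightarrow> 'y \<Rightarrow> real) \<Rightarrow> 'x \<Rightarrow> ('x \<times> 'y \<Rightarrow> complex)" where
  "szegedy_phi P \<theta> x = (\<lambda>(x', y). if x' = x then complex_of_real (sqrt (P x y)) * cis (\<theta> x y) else 0)"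

definition szegedy_psi :: "('y \<Rightarrow> 'x \<Rightarrow> real) \<Rightarrow> ('x \<Rightarrow> 'y \<Rightarrow> real) \<Rightarrow> 'y \<Rightarrow> ('x \<times> 'y \<Rightarrow> complex)" where
  "szegedy_psi Q \<theta>' y = (\<lambda>(x, y'). if y' = y then complex_of_real (sqrt (Q y x)) * cis (\<theta>' x y) else 0)"

definition szegedy_W :: "'x set \<Rightarrow> 'y set \<Rightarrow> ('x \<Rightarrow> 'y \<Rightarrow> real) \<Rightarrow> ('y \<Rightarrow> 'x \<Rightarrow> real)
    \<Rightarrow> ('x \<Rightarrow> 'y \<Rightarrow> real) \<Rightarrow> ('x \<Rightarrow> 'y \<Rightarrow> real) \<Rightarrow> ('x \<times> 'y \<Rightarrow> complex) \<Rightarrow> ('x \<times> 'y \<Rightarrow> complex)" where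
  "szegedy_W X Y P Q \<theta> \<theta>' g =
     reflection (X \<times> Y) Y (szegedy_psi Q \<theta>') (reflection (X \<times> Y) X (szegedy_phi P \<theta>) g)"

definition szegedy_data :: "'x set \<Rightarrow> 'y set \<Rightarrow> ('x \<Rightarrow> 'y \<Rightarrow> bool) \<Rightarrow> ('x \<Rightarrow> 'y \<Rightarrow> real) \<Rightarrow> ('y \<Rightarrow> 'x \<Rightarrow> real) \<Rightarrow> bool" where
  "szegedy_data X Y M P Q \<longleftrightarrow>
     (\<forall>x\<in>X. \<forall>y\<in>Y. P x y \<ge> 0 \<and> Q y x \<ge> 0 \<and> (\<not> M x y \<longrightarrow> P x y = 0 \<and> Q y x = 0)) \<and>
     (\<forall>x\<in>X. (\<Sum>y\<in>Y. P x y) = 1) \<and> (\<forall>y\<in>Y. (\<Sum>x\<in>X. Q y x) = 1)"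

definition subdiv_adj :: "('a \<Rightarrow> 'v) \<Rightarrow> 'v \<Rightarrow> 'a set \<Rightarrow> bool" where
  "subdiv_adj orig v e \<longleftrightarrow> v \<in> orig ` e"

end

theory Submission
  imports Defs
begin

text \<open>Choose phi_v as the image of
  alpha^(v), i.e. p_ve = |alpha_a|^2 and theta_ve = arg alpha_a for the arc a of e leaving v, and
  psi_e as the uniform superposition of the two endpoints of e with zero phases. Then R0 acts on
  the image of U_eta as the coin C', while R1 is, on each two-dimensional fibre over an edge, the
  reflection in the normalised sum of its two basis vectors, i.e. it swaps them: this is the
  flip-flop shift S.\<close>

lemma reflection_cong:
  assumes "\<And>j. j \<in> I \<Longrightarrow> g j = g' j" and "i \<in> I"
  shows "reflection I K psi g i = reflection I K psi g' i"
  using assms unfolding reflection_def by (simp cong: sum.cong)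

lemma reflection_single_term:
  assumes "finite K" "k0 \<in> K" "\<And>k. k \<in> K \<Longrightarrow> k \<noteq> k0 \<Longrightarrow> psi k i = 0"
  shows "reflection I K psi g i = 2 * (psi k0 i * (\<Sum>j\<in>I. cnj (psi k0 j) * g j)) - g i"
  using assms unfolding reflection_def by (simp add: sum.remove)

definition amplitude_prob :: "('x \<times> 'y \<Rightarrow> complex) \<Rightarrow> 'x \<Rightarrow> 'y \<Rightarrow> real" where
  "amplitude_prob \<beta> x y = (cmod (\<beta> (x, y)))\<^sup>2"

definition amplitude_phase :: "('x \<times> 'y \<Rightarrow> complex) \<Rightarrow> 'x \<Rightarrow> 'y \<Rightarrow> real" where
  "amplitude_phase \<beta> x y = Arg (\<beta> (x, y))"

lemma szegedy_phi_polar: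
  "szegedy_phi (amplitude_prob \<beta>) (amplitude_phase \<beta>) x (y, e) = (if y = x then \<beta> (y, e) else 0)"
  by (simp add: szegedy_phi_def amplitude_prob_def amplitude_phase_def
      rcis_cmod_Arg[unfolded rcis_def])

definition endpoint_prob :: "('a \<Rightarrow> 'v) \<Rightarrow> 'a set \<Rightarrow> 'v \<Rightarrow> real" where
  "endpoint_prob orig e v = (if v \<in> orig ` e then 1/2 else 0)"

lemma szegedy_psi_endpoint:
  "szegedy_psi (endpoint_prob orig) (\<lambda>_ _. 0) e (x, e') =
     (if e' = e \<and> x \<in> orig ` e then complex_of_real (sqrt (1/2)) else 0)"
  by (simp add: szegedy_psi_def endpoint_prob_def)

lemma U_eta_nonincident:
  assumes "x \<notin> orig ` e"
  shows "U_eta A rv orig k (x, e) = 0"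
  using assms unfolding U_eta_def by (auto intro!: sum.neutral)

locale loopless_graph =
  fixes V :: "'v set" and A :: "'a set" and rv :: "'a \<Rightarrow> 'a" and orig :: "'a \<Rightarrow> 'v"
  assumes loopless: "loopless_multigraph V A rv orig"
begin

abbreviation "E \<equiv> edges A rv"
abbreviation "\<eta> \<equiv> U_eta A rv orig"

lemma finite_V: "finite V" and finite_A: "finite A"
  using loopless by (auto simp: loopless_multigraph_def)

lemma arcD:
  assumes "a \<in> A"
  shows "rv a \<in> A" "rv (rv a) = a" "rv a \<noteq> a" "orig a \<in> V" "orig (rv a) \<noteq> orig a"
  using loopless assms by (auto simp: loopless_multigraph_def)

lemma edges_eq_image: "E = (\<lambda>a. {a, rv a}) ` A"
  unfolding edges_def by auto

lemma finite_edges: "finite E"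
  by (simp add: edges_eq_image finite_A)

lemma edgeE:
  assumes "e \<in> E"
  obtains a where "a \<in> A" "e = {a, rv a}"
  using assms by (auto simp: edges_eq_image)

lemma U_eta_edge:
  assumes "a \<in> A"
  shows "\<eta> k (x, {a, rv a}) =
    (if x = orig a then k a else if x = orig (rv a) then k (rv a) else 0)"
proof -
  have "{b \<in> A. orig b = x \<and> {a, rv a} = {b, rv b}} =
      (if x = orig a then {a} else if x = orig (rv a) then {rv a} else {})"
    using arcD[OF assms] assms by (auto simp: doubleton_eq_iff)
  then show ?thesis unfolding U_eta_def by simp
qed

lemma U_eta_arc:
  assumes "a \<in> arcs_at A orig v"
  shows "\<eta> k (v, {a, rv a}) = k a"
  using assms U_eta_edge[of a k v] by (simp add: arcs_at_def)

lemma sum_edges_at_vertex: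
  assumes "\<And>e. e \<in> E \<Longrightarrow> v \<notin> orig ` e \<Longrightarrow> G e = 0"
  shows "(\<Sum>e\<in>E. G e) = (\<Sum>a\<in>arcs_at A orig v. G {a, rv a})"
proof -
  let ?T = "(\<lambda>a. {a, rv a}) ` arcs_at A orig v"
  have incident: "e \<in> ?T" if "e \<in> E" "v \<in> orig ` e" for e
  proof -
    obtain a where a: "a \<in> A" "e = {a, rv a}" using edgeE[OF \<open>e \<in> E\<close>] .
    show ?thesis
    proof (cases "orig a = v")
      case True
      then show ?thesis using a by (auto simp: arcs_at_def)
    next
      case False
      then have "rv a \<in> arcs_at A orig v" "e = {rv a, rv (rv a)}"
        using that(2) a arcD[OF a(1)] by (auto simp: arcs_at_def)
      then show ?thesis by blast
    qed
  qed
  have "(\<Sum>e\<in>E. G e) = (\<Sum>e\<in>?T. G e)"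
    by (rule sum.mono_neutral_right[OF finite_edges])
       (use assms incident in \<open>auto simp: edges_def arcs_at_def\<close>)
  also have "\<dots> = (\<Sum>a\<in>arcs_at A orig v. G {a, rv a})"
  proof (rule sum.reindex[unfolded comp_def], rule inj_onI)
    fix a b
    assume "a \<in> arcs_at A orig v" "b \<in> arcs_at A orig v" "{a, rv a} = {b, rv b}"
    then show "a = b" using arcD(5)[of b] by (auto simp: arcs_at_def doubleton_eq_iff)
  qed
  finally show ?thesis .
qed

lemma sum_cnj_U_eta_at_vertex:
  "(\<Sum>e\<in>E. cnj (\<eta> g (x, e)) * \<eta> h (x, e)) = (\<Sum>a\<in>arcs_at A orig x. cnj (g a) * h a)"
  by (subst sum_edges_at_vertex[where v = x]) (simp_all add: U_eta_nonincident U_eta_arc)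

lemma sum_vertices_U_eta:
  assumes "a \<in> A"
  shows "(\<Sum>x\<in>V. \<eta> k (x, {a, rv a})) = k a + k (rv a)"
proof -
  have "\<eta> k (x, {a, rv a}) = (if x = orig a then k a else 0) + (if x = orig (rv a) then k (rv a) else 0)"
    for x using arcD(5)[OF assms] by (simp add: U_eta_edge[OF assms])
  then show ?thesis
    using arcD(4)[OF assms] arcD(4)[OF arcD(1)[OF assms]] by (simp add: sum.distrib finite_V)
qed

lemma szegedy_data_grover:
  assumes "\<forall>v\<in>V. (\<Sum>a\<in>arcs_at A orig v. (cmod (alpha a))\<^sup>2) = 1"
  shows "szegedy_data V E (subdiv_adj orig) (amplitude_prob (\<eta> alpha)) (endpoint_prob orig)"
  unfolding szegedy_data_def
proof (intro conjI ballI)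
  fix x e
  show "amplitude_prob (\<eta> alpha) x e \<ge> 0" "endpoint_prob orig e x \<ge> 0"
    by (simp_all add: amplitude_prob_def endpoint_prob_def)
  show "\<not> subdiv_adj orig x e \<longrightarrow> amplitude_prob (\<eta> alpha) x e = 0 \<and> endpoint_prob orig e x = 0"
    by (simp add: subdiv_adj_def amplitude_prob_def endpoint_prob_def U_eta_nonincident)
next
  fix x assume "x \<in> V"
  have "(\<Sum>e\<in>E. amplitude_prob (\<eta> alpha) x e) = (\<Sum>a\<in>arcs_at A orig x. (cmod (alpha a))\<^sup>2)"
    by (subst sum_edges_at_vertex[where v = x])
       (simp_all add: amplitude_prob_def U_eta_nonincident U_eta_arc)
  then show "(\<Sum>e\<in>E. amplitude_prob (\<eta> alpha) x e) = 1" using assms \<open>x \<in> V\<close> by simp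
next
  fix e assume "e \<in> E"
  then obtain a where a: "a \<in> A" "e = {a, rv a}" by (rule edgeE)
  have "(\<Sum>x\<in>V. endpoint_prob orig e x) = (\<Sum>x\<in>V \<inter> orig ` e. 1/2)"
    unfolding endpoint_prob_def by (rule sum.inter_restrict[OF finite_V, symmetric])
  also have "V \<inter> orig ` e = {orig a, orig (rv a)}"
    using a arcD[OF a(1)] arcD[OF arcD(1)[OF a(1)]] by auto
  finally show "(\<Sum>x\<in>V. endpoint_prob orig e x) = 1" using arcD[OF a(1)] by simp
qed

lemma reflection_vertex_U_eta:
  assumes x: "x \<in> V" and e: "e \<in> E"
  shows "reflection (V \<times> E) V (szegedy_phi (amplitude_prob (\<eta> alpha)) (amplitude_phase (\<eta> alpha)))
           (\<eta> f) (x, e) = \<eta> (grover_coin A orig alpha f) (x, e)"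
proof -
  define s where "s = (\<Sum>a\<in>arcs_at A orig x. cnj (alpha a) * f a)"
  have inner: "(\<Sum>j\<in>V \<times> E. cnj (szegedy_phi (amplitude_prob (\<eta> alpha)) (amplitude_phase (\<eta> alpha)) x j)
      * \<eta> f j) = s"
  proof -
    have "(\<Sum>j\<in>V \<times> E. cnj (szegedy_phi (amplitude_prob (\<eta> alpha)) (amplitude_phase (\<eta> alpha)) x j)
        * \<eta> f j) = (\<Sum>y\<in>V. if y = x then \<Sum>e'\<in>E. cnj (\<eta> alpha (x, e')) * \<eta> f (x, e') else 0)"
      unfolding sum.cartesian_product' by (intro sum.cong refl) (simp add: szegedy_phi_polar)
    also have "\<dots> = s"
      using x by (simp add: finite_V sum_cnj_U_eta_at_vertex s_def)
    finally show ?thesis .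
  qed
  obtain b where b: "b \<in> A" "e = {b, rv b}" using edgeE[OF e] .
  have "reflection (V \<times> E) V (szegedy_phi (amplitude_prob (\<eta> alpha)) (amplitude_phase (\<eta> alpha)))
          (\<eta> f) (x, e) = 2 * (\<eta> alpha (x, e) * s) - \<eta> f (x, e)"
    by (subst reflection_single_term[OF finite_V x]) (simp_all add: szegedy_phi_polar inner)
  also have "\<dots> = \<eta> (grover_coin A orig alpha f) (x, e)"
    using arcD[OF b(1)] by (auto simp: b(2) U_eta_edge[OF b(1)] grover_coin_def s_def)
  finally show ?thesis .
qed

lemma reflection_edge_U_eta:
  assumes e: "e \<in> E"
  shows "reflection (V \<times> E) E (szegedy_psi (endpoint_prob orig) (\<lambda>_ _. 0)) (\<eta> k) (v, e)
           = \<eta> (shift_op rv k) (v, e)"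
proof -
  obtain a where a: "a \<in> A" "e = {a, rv a}" using edgeE[OF e] .
  define c where "c = complex_of_real (sqrt (1/2))"
  have inner: "(\<Sum>j\<in>V \<times> E. cnj (szegedy_psi (endpoint_prob orig) (\<lambda>_ _. 0) e j) * \<eta> k j)
      = c * (k a + k (rv a))"
  proof -
    have "(\<Sum>j\<in>V \<times> E. cnj (szegedy_psi (endpoint_prob orig) (\<lambda>_ _. 0) e j) * \<eta> k j)
        = (\<Sum>y\<in>V. \<Sum>e'\<in>E. if e' = e then c * \<eta> k (y, e) else 0)"
      unfolding sum.cartesian_product'
      by (intro sum.cong refl) (simp add: szegedy_psi_endpoint c_def U_eta_nonincident)
    also have "\<dots> = c * (\<Sum>y\<in>V. \<eta> k (y, e))"
      using e by (simp add: finite_edges sum_distrib_left)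
    finally show ?thesis by (simp add: a(2) sum_vertices_U_eta[OF a(1)])
  qed
  have "reflection (V \<times> E) E (szegedy_psi (endpoint_prob orig) (\<lambda>_ _. 0)) (\<eta> k) (v, e)
      = 2 * ((if v \<in> orig ` e then c else 0) * (c * (k a + k (rv a)))) - \<eta> k (v, e)"
    by (subst reflection_single_term[OF finite_edges e])
       (simp_all add: szegedy_psi_endpoint inner c_def)
  also have "\<dots> = \<eta> (shift_op rv k) (v, e)"
  proof (cases "v \<in> orig ` e")
    case True
    have cc: "2 * (c * (c * z)) = z" for z
      by (simp add: c_def mult.assoc [symmetric] flip: of_real_mult)
    show ?thesis
      using True arcD[OF a(1)] by (auto simp: cc a(2) U_eta_edge[OF a(1)] shift_op_def)
  next
    case False
    then show ?thesis by (simp add: U_eta_nonincident)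
  qed
  finally show ?thesis .
qed

end

theorem theorem1:
  fixes V :: "'v set" and A :: "'a set" and rv :: "'a \<Rightarrow> 'a" and orig :: "'a \<Rightarrow> 'v"
    and alpha :: "'a \<Rightarrow> complex"
  assumes "loopless_multigraph V A rv orig"
    and "\<forall>v\<in>V. (\<Sum>a\<in>arcs_at A orig v. (cmod (alpha a))\<^sup>2) = 1"
  shows "\<exists>P Q \<theta> \<theta>'. szegedy_data V (edges A rv) (subdiv_adj orig) P Q \<and>
           (\<forall>f. \<forall>v\<in>V. \<forall>e\<in>edges A rv.
              szegedy_W V (edges A rv) P Q \<theta> \<theta>' (U_eta A rv orig f) (v, e)
                = U_eta A rv orig (flipflop_U A rv orig alpha f) (v, e))"
proof -
  interpret loopless_graph V A rv orig by standard (rule assms(1))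
  define P where "P = amplitude_prob (\<eta> alpha)"
  define \<theta> where "\<theta> = amplitude_phase (\<eta> alpha)"
  have "szegedy_W V E P (endpoint_prob orig) \<theta> (\<lambda>_ _. 0) (\<eta> f) (v, e)
          = \<eta> (flipflop_U A rv orig alpha f) (v, e)"
    if "v \<in> V" "e \<in> E" for f v e
  proof -
    have coin: "reflection (V \<times> E) V (szegedy_phi P \<theta>) (\<eta> f) j = \<eta> (grover_coin A orig alpha f) j"
      if "j \<in> V \<times> E" for j
      using that reflection_vertex_U_eta unfolding P_def \<theta>_def by auto
    have "szegedy_W V E P (endpoint_prob orig) \<theta> (\<lambda>_ _. 0) (\<eta> f) (v, e) =
        reflection (V \<times> E) E (szegedy_psi (endpoint_prob orig) (\<lambda>_ _. 0))
          (\<eta> (grover_coin A orig alpha f)) (v, e)"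
      unfolding szegedy_W_def by (rule reflection_cong) (use coin that in auto)
    also have "\<dots> = \<eta> (flipflop_U A rv orig alpha f) (v, e)"
      unfolding flipflop_U_def by (rule reflection_edge_U_eta[OF that(2)])
    finally show ?thesis .
  qed
  with szegedy_data_grover[OF assms(2)] show ?thesis
    unfolding P_def by blast
qed

end
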